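(* Let $L$ be a finite lattice which is a subdirect product $L\subseteq\prod_{i=1}^t L_i$ of finite lattices. Then every line top of $L$ is sub-irreducible, and consequently every line top of $L$ belongs to the scaffolding $G(L)$.
   Context: $\pi_i:L\to L_i$ is the surjective restricted projection, $\sigma_i(y):=\bigwedge\{x\in L:\pi_i(x)=y\}$, and $G(L):=\bigcup_{i=1}^t\sigma_i(L_i\setminus\{0\})$. An element $x$ is a line top if the set of its lower covers $x_1,\dots,x_n$ has $n\ge 3$ elements and their meet $\underline{x}=x_1\wedge\dots\wedge x_n$ is covered by each $x_i$. A quotient $a/b$ is prime if $b\prec a$; $a/b$ transposes up to $c/d$ if $a\wedge d=b$, $a\vee d=c$; quotients are projective if connected by a finite chain of up/down transpositions. An element $v\ne0$ is sub-irreducible if all prime quotients $v/w$ ($w\prec v$) are mutually projective. *)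

theory Defs
  imports "HOL-Algebra.Lattice" "HOL-Library.FuncSet"
begin

definition covered_by :: "('a, 'b) gorder_scheme \<Rightarrow> 'a \<Rightarrow> 'a \<Rightarrow> bool" where
  "covered_by M y x \<longleftrightarrow> y \<in> carrier M \<and> x \<in> carrier M \<and> y \<sqsubset>\<^bsub>M\<^esub> x \<and>
     \<not> (\<exists>z\<in>carrier M. y \<sqsubset>\<^bsub>M\<^esub> z \<and> z \<sqsubset>\<^bsub>M\<^esub> x)"

definition lower_covers :: "('a, 'b) gorder_scheme \<Rightarrow> 'a \<Rightarrow> 'a set" where
  "lower_covers M x = {y \<in> carrier M. covered_by M y x}"

definition line_top :: "('a, 'b) gorder_scheme \<Rightarrow> 'a \<Rightarrow> bool" where
  "line_top M x \<longleftrightarrow> x \<in> carrier M \<and> finite (lower_covers M x) \<and>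
     card (lower_covers M x) \<ge> 3 \<and>
     (\<forall>y\<in>lower_covers M x. covered_by M (\<Sqinter>\<^bsub>M\<^esub> (lower_covers M x)) y)"

text \<open>A quotient a/b is represented by the pair (a, b).\<close>

definition prime_quotient :: "('a, 'b) gorder_scheme \<Rightarrow> 'a \<times> 'a \<Rightarrow> bool" where
  "prime_quotient M q \<longleftrightarrow> covered_by M (snd q) (fst q)"

definition transposes_up :: "('a, 'b) gorder_scheme \<Rightarrow> 'a \<times> 'a \<Rightarrow> 'a \<times> 'a \<Rightarrow> bool" where
  "transposes_up M q r \<longleftrightarrow>
     fst q \<in> carrier M \<and> snd q \<in> carrier M \<and> fst r \<in> carrier M \<and> snd r \<in> carrier M \<and>
     fst q \<sqinter>\<^bsub>M\<^esub> snd r = snd q \<and> fst q \<squnion>\<^bsub>M\<^esub> snd r = fst r"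

definition transposes_down :: "('a, 'b) gorder_scheme \<Rightarrow> 'a \<times> 'a \<Rightarrow> 'a \<times> 'a \<Rightarrow> bool" where
  "transposes_down M q r \<longleftrightarrow> transposes_up M r q"

definition projective :: "('a, 'b) gorder_scheme \<Rightarrow> 'a \<times> 'a \<Rightarrow> 'a \<times> 'a \<Rightarrow> bool" where
  "projective M = (\<lambda>q r. transposes_up M q r \<or> transposes_down M q r)\<^sup>*\<^sup>*"

definition sub_irreducible :: "('a, 'b) gorder_scheme \<Rightarrow> 'a \<Rightarrow> bool" where
  "sub_irreducible M v \<longleftrightarrow> v \<in> carrier M \<and> v \<noteq> \<bottom>\<^bsub>M\<^esub> \<and>
     (\<forall>w1 \<in> lower_covers M v. \<forall>w2 \<in> lower_covers M v. projective M (v, w1) (v, w2))"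

text \<open>Subdirect products. The factors L_1..L_t are given as a family Ls of gorders over a
  common element type; elements of the product are the extensional functions on {1..t}.\<close>

definition prod_sub :: "(nat \<Rightarrow> 'a gorder) \<Rightarrow> nat \<Rightarrow> (nat \<Rightarrow> 'a) set \<Rightarrow> (nat \<Rightarrow> 'a) gorder" where
  "prod_sub Ls t S = \<lparr>carrier = S, eq = (=),
     le = (\<lambda>x y. \<forall>i\<in>{1..t}. x i \<sqsubseteq>\<^bsub>Ls i\<^esub> y i)\<rparr>"

definition subdirect_product :: "(nat \<Rightarrow> 'a gorder) \<Rightarrow> nat \<Rightarrow> (nat \<Rightarrow> 'a) set \<Rightarrow> bool" where
  "subdirect_product Ls t S \<longleftrightarrow>
     (\<forall>i\<in>{1..t}. lattice (Ls i) \<and> finite (carrier (Ls i))) \<and>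
     S \<noteq> {} \<and>
     S \<subseteq> (\<Pi>\<^sub>E i\<in>{1..t}. carrier (Ls i)) \<and>
     (\<forall>x\<in>S. \<forall>y\<in>S. (\<lambda>i\<in>{1..t}. x i \<sqinter>\<^bsub>Ls i\<^esub> y i) \<in> S) \<and>
     (\<forall>x\<in>S. \<forall>y\<in>S. (\<lambda>i\<in>{1..t}. x i \<squnion>\<^bsub>Ls i\<^esub> y i) \<in> S) \<and>
     (\<forall>i\<in>{1..t}. (\<lambda>x. x i) ` S = carrier (Ls i))"

definition sigma :: "(nat \<Rightarrow> 'a gorder) \<Rightarrow> nat \<Rightarrow> (nat \<Rightarrow> 'a) set \<Rightarrow> nat \<Rightarrow> 'a \<Rightarrow> (nat \<Rightarrow> 'a)" where
  "sigma Ls t S i y = \<Sqinter>\<^bsub>prod_sub Ls t S\<^esub> {x \<in> S. x i = y}"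

definition scaffolding :: "(nat \<Rightarrow> 'a gorder) \<Rightarrow> nat \<Rightarrow> (nat \<Rightarrow> 'a) set \<Rightarrow> (nat \<Rightarrow> 'a) set" where
  "scaffolding Ls t S = (\<Union>i\<in>{1..t}. sigma Ls t S i ` (carrier (Ls i) - {\<bottom>\<^bsub>Ls i\<^esub>}))"

end

theory Submission
  imports Defs
begin

text \<open>
  Let x be a line top of a finite lattice S, with lower covers \<open>x\<^sub>1, ..., x\<^sub>n\<close>
  (n \<ge> 3) all covering their meet m, the line base.  Two distinct lower covers cannot be
  comparable, so they meet in m and join to x.  Hence for any third lower cover c the prime
  quotient \<open>x/x\<^sub>j\<close> transposes down to c/m, which transposes up to \<open>x/x\<^sub>k\<close>: all prime
  quotients under x are projective, i.e. x is sub-irreducible.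

  Since
  m \<noteq> x, they differ in some coordinate i.  If some z in S with z i = x i were not above x,
  then x \<sqinter> z would lie below a lower cover k with k i = x i; every other lower cover w
  satisfies m = w \<sqinter> k, hence w i = m i, and joining two of them gives x i = m i, which is
  absurd.  So x is the least element of its fibre over x i, i.e. x = \<open>\<sigma>\<^sub>i(x i)\<close>, and
  x i is not the bottom of \<open>L\<^sub>i\<close> because it lies strictly above m i.
\<close>

section \<open>Infima, bottoms and covers in partial orders\<close>

lemma (in partial_order) inf_eqI:
  assumes "greatest L g (Lower L A)"
  shows "\<Sqinter>A = g"
  unfolding inf_def using assms by (rule some_equality) (use assms greatest_unique in blast)

lemma (in partial_order) sup_eqI:
  assumes "least L s (Upper L A)"
  shows "\<Squnion>A = s"
  unfolding sup_def using assms by (rule some_equality) (use assms least_unique in blast)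

lemma (in partial_order) inf_eq_least_element:
  assumes "A \<subseteq> carrier L" "a \<in> A" "\<forall>z\<in>A. a \<sqsubseteq> z"
  shows "\<Sqinter>A = a"
  using assms by (intro inf_eqI) (auto simp: greatest_def Lower_def)

lemma (in partial_order) bottom_eqI:
  assumes "least L b (carrier L)"
  shows "\<bottom> = b"
  unfolding bottom_def using assms by (rule some_equality) (use assms least_unique in blast)

lemma (in lattice) finite_lattice_has_least:
  assumes "finite (carrier L)" "carrier L \<noteq> {}"
  shows "least L (\<Sqinter>(carrier L)) (carrier L)"
  using assms finite_inf_greatest[of "carrier L"]
  by (auto simp: least_def intro: greatest_Lower_below)

lemma (in partial_order) covered_byD:
  assumes "covered_by L u v" "z \<in> carrier L" "u \<sqsubseteq> z" "z \<sqsubseteq> v"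
  shows "z = u \<or> z = v"
  using assms unfolding covered_by_def lless_eq by blast

text \<open>In a finite partial order every element strictly below x lies below some lower
  cover of x: walk upwards inside the interval until no element is left in between.\<close>
lemma (in partial_order) lower_cover_above:
  assumes fin: "finite (carrier L)" and x: "x \<in> carrier L"
    and "y \<in> carrier L" "y \<sqsubset> x"
  shows "\<exists>w\<in>lower_covers L x. y \<sqsubseteq> w"
  using assms(3,4)
proof (induction "card {u \<in> carrier L. y \<sqsubset> u \<and> u \<sqsubset> x}" arbitrary: y rule: less_induct)
  case less
  show ?case
  proof (cases "\<exists>u\<in>carrier L. y \<sqsubset> u \<and> u \<sqsubset> x")
    case True
    then obtain u where u: "u \<in> carrier L" "y \<sqsubset> u" "u \<sqsubset> x" by blast
    have "{v \<in> carrier L. u \<sqsubset> v \<and> v \<sqsubset> x} \<subset> {v \<in> carrier L. y \<sqsubset> v \<and> v \<sqsubset> x}"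
      using u less.prems by (auto simp: lless_eq intro: le_trans[of y u])
    then have "card {v \<in> carrier L. u \<sqsubset> v \<and> v \<sqsubset> x} < card {v \<in> carrier L. y \<sqsubset> v \<and> v \<sqsubset> x}"
      using fin by (intro psubset_card_mono) auto
    then obtain w where "w \<in> lower_covers L x" "u \<sqsubseteq> w"
      using less.hyps u by blast
    moreover have "y \<sqsubseteq> u" using u(2) by (simp add: lless_eq)
    ultimately show ?thesis
      using u less.prems by (auto simp: lower_covers_def covered_by_def intro: le_trans)
  next
    case False
    then have "y \<in> lower_covers L x"
      using less.prems x by (auto simp: lower_covers_def covered_by_def)
    then show ?thesis using less.prems by blast
  qed
qed

section \<open>Line tops in an arbitrary lattice\<close>

definition line_base :: "('a, 'b) gorder_scheme \<Rightarrow> 'a \<Rightarrow> 'a" where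
  "line_base M x = \<Sqinter>\<^bsub>M\<^esub> (lower_covers M x)"

lemma line_top_third_cover:
  assumes "line_top M x"
  shows "\<exists>c\<in>lower_covers M x. c \<noteq> a \<and> c \<noteq> b"
proof -
  have "card (lower_covers M x) - card {a, b} \<le> card (lower_covers M x - {a, b})"
    by (rule diff_card_le_card_Diff) simp
  moreover have "card {a, b} \<le> 2" by (simp add: card_insert_le_m1)
  ultimately have "lower_covers M x - {a, b} \<noteq> {}"
    using assms unfolding line_top_def by fastforce
  then show ?thesis by blast
qed

context lattice
begin

lemma lower_coversD:
  assumes "w \<in> lower_covers L x"
  shows "w \<in> carrier L" "x \<in> carrier L" "w \<sqsubseteq> x" "w \<noteq> x"
  using assms unfolding lower_covers_def covered_by_def lless_eq by auto

lemma line_baseD: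
  assumes "line_top L x" "w \<in> lower_covers L x"
  shows "covered_by L (line_base L x) w"
  using assms unfolding line_top_def line_base_def by blast

lemma line_top_meet_join:
  assumes lt: "line_top L x" and a: "a \<in> lower_covers L x" and b: "b \<in> lower_covers L x"
    and "a \<noteq> b"
  shows "a \<sqinter> b = line_base L x" and "a \<squnion> b = x"
proof -
  note a' = lower_coversD[OF a] and b' = lower_coversD[OF b]
  have not_le: "\<not> a \<sqsubseteq> b" "\<not> b \<sqsubseteq> a"
    using covered_byD[of a x b] covered_byD[of b x a] a b a' b' \<open>a \<noteq> b\<close>
    unfolding lower_covers_def by auto
  let ?m = "line_base L x"
  have m: "?m \<in> carrier L" "?m \<sqsubseteq> a" "?m \<sqsubseteq> b"
    using line_baseD[OF lt a] line_baseD[OF lt b] unfolding covered_by_def lless_eq by auto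
  have "?m \<sqsubseteq> a \<sqinter> b" by (rule meet_le) (use m a' b' in auto)
  then have "a \<sqinter> b = ?m \<or> a \<sqinter> b = a"
    using covered_byD[OF line_baseD[OF lt a], of "a \<sqinter> b"] a' b' meet_left by auto
  then show "a \<sqinter> b = ?m"
    using not_le(1) meet_right[of a b] a' b' by auto
  have "a \<squnion> b \<sqsubseteq> x" by (rule join_le) (use a' b' in auto)
  then have "a \<squnion> b = a \<or> a \<squnion> b = x"
    using covered_byD[of a x "a \<squnion> b"] a a' b' join_left unfolding lower_covers_def by auto
  then show "a \<squnion> b = x"
    using not_le(2) join_right[of a b] a' b' by auto
qed

lemma line_top_transposes_up:
  assumes "line_top L x" "a \<in> lower_covers L x" "c \<in> lower_covers L x" "a \<noteq> c"
  shows "transposes_up L (c, line_base L x) (x, a)"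
  using line_top_meet_join[OF assms(1,3,2)] assms lower_coversD line_baseD[OF assms(1,2)]
  unfolding transposes_up_def covered_by_def by auto

text \<open>Any two prime quotients x/w1, x/w2 below a line top are projective: go down from x/w1
  to c/base and up again to x/w2, through a third lower cover c.\<close>
lemma line_top_projective:
  assumes lt: "line_top L x" and "w1 \<in> lower_covers L x" "w2 \<in> lower_covers L x"
  shows "projective L (x, w1) (x, w2)"
proof -
  obtain c where c: "c \<in> lower_covers L x" "c \<noteq> w1" "c \<noteq> w2"
    using line_top_third_cover[OF lt] by blast
  have down: "transposes_down L (x, w1) (c, line_base L x)"
    using line_top_transposes_up[OF lt] assms c by (simp add: transposes_down_def)
  have up: "transposes_up L (c, line_base L x) (x, w2)"
    using line_top_transposes_up[OF lt] assms c by simp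
  show ?thesis
    unfolding projective_def
    by (rule rtranclp.rtrancl_into_rtrancl[OF r_into_rtranclp]) (use down up in auto)
qed

theorem line_top_sub_irreducible:
  assumes bot: "least L b (carrier L)" and lt: "line_top L x"
  shows "sub_irreducible L x"
proof -
  obtain w where w: "w \<in> lower_covers L x"
    using line_top_third_cover[OF lt] by blast
  have "x \<noteq> \<bottom>"
    using bottom_eqI[OF bot] bot lower_coversD[OF w] by (auto simp: least_def)
  then show ?thesis
    using lt line_top_projective[OF lt] unfolding sub_irreducible_def line_top_def by blast
qed

end

section \<open>Subdirect products\<close>

lemma prod_sub_carrier [simp]: "carrier (prod_sub Ls t S) = S"
  by (simp add: prod_sub_def)

lemma prod_sub_le: "x \<sqsubseteq>\<^bsub>prod_sub Ls t S\<^esub> y \<longleftrightarrow> (\<forall>i\<in>{1..t}. x i \<sqsubseteq>\<^bsub>Ls i\<^esub> y i)"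
  by (simp add: prod_sub_def)

lemma prod_sub_eq: "eq (prod_sub Ls t S) = (=)"
  by (simp add: prod_sub_def)

context
  fixes Ls :: "nat \<Rightarrow> 'a gorder" and t :: nat and S :: "(nat \<Rightarrow> 'a) set"
  assumes subdirect: "subdirect_product Ls t S"
begin

abbreviation "L \<equiv> prod_sub Ls t S"

lemma factor_lattice: "i \<in> {1..t} \<Longrightarrow> lattice (Ls i)"
  using subdirect by (simp add: subdirect_product_def)

lemma S_extensional: "S \<subseteq> (\<Pi>\<^sub>E i\<in>{1..t}. carrier (Ls i))"
  using subdirect by (simp add: subdirect_product_def)

lemma coord_in_carrier: "x \<in> S \<Longrightarrow> i \<in> {1..t} \<Longrightarrow> x i \<in> carrier (Ls i)"
  using S_extensional by blast

lemma S_coord_ext: "x \<in> S \<Longrightarrow> y \<in> S \<Longrightarrow> (\<And>i. i \<in> {1..t} \<Longrightarrow> x i = y i) \<Longrightarrow> x = y"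
  by (rule PiE_ext[OF subsetD[OF S_extensional] subsetD[OF S_extensional]])

lemma finite_S: "finite S"
proof (rule finite_subset[OF S_extensional])
  show "finite (\<Pi>\<^sub>E i\<in>{1..t}. carrier (Ls i))"
    using subdirect by (intro finite_PiE) (auto simp: subdirect_product_def)
qed

lemma factor_partial_order: "i \<in> {1..t} \<Longrightarrow> partial_order (Ls i)"
  using factor_lattice by (simp add: lattice_def upper_semilattice_def)

lemma prod_le_refl: "x \<in> S \<Longrightarrow> x \<sqsubseteq>\<^bsub>L\<^esub> x"
  unfolding prod_sub_le
proof
  fix i assume "x \<in> S" and i: "i \<in> {1..t}"
  interpret Li: partial_order "Ls i" using i by (rule factor_partial_order)
  show "x i \<sqsubseteq>\<^bsub>Ls i\<^esub> x i" using \<open>x \<in> S\<close> i coord_in_carrier by simp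
qed

lemma prod_le_antisym:
  assumes "x \<sqsubseteq>\<^bsub>L\<^esub> y" "y \<sqsubseteq>\<^bsub>L\<^esub> x" "x \<in> S" "y \<in> S"
  shows "x = y"
proof (rule S_coord_ext)
  fix i assume i: "i \<in> {1..t}"
  interpret Li: partial_order "Ls i" using i by (rule factor_partial_order)
  show "x i = y i"
    using assms i coord_in_carrier unfolding prod_sub_le by (intro Li.le_antisym) simp_all
qed (use assms in simp_all)

lemma prod_le_trans:
  assumes "x \<sqsubseteq>\<^bsub>L\<^esub> y" "y \<sqsubseteq>\<^bsub>L\<^esub> z" "x \<in> S" "y \<in> S" "z \<in> S"
  shows "x \<sqsubseteq>\<^bsub>L\<^esub> z"
  unfolding prod_sub_le
proof
  fix i assume i: "i \<in> {1..t}"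
  interpret Li: partial_order "Ls i" using i by (rule factor_partial_order)
  have "x i \<sqsubseteq>\<^bsub>Ls i\<^esub> y i" "y i \<sqsubseteq>\<^bsub>Ls i\<^esub> z i"
    using assms(1,2) i unfolding prod_sub_le by blast+
  then show "x i \<sqsubseteq>\<^bsub>Ls i\<^esub> z i"
    using assms(3-5) i coord_in_carrier by (meson Li.le_trans)
qed

lemma prod_partial_order: "partial_order L"
proof
  show "x \<sqsubseteq>\<^bsub>L\<^esub> x" if "x \<in> carrier L" for x
    using that by (simp add: prod_le_refl)
  show "x .=\<^bsub>L\<^esub> y"
    if "x \<sqsubseteq>\<^bsub>L\<^esub> y" "y \<sqsubseteq>\<^bsub>L\<^esub> x" "x \<in> carrier L" "y \<in> carrier L" for x y
    using that by (simp add: prod_sub_eq prod_le_antisym)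
  show "x \<sqsubseteq>\<^bsub>L\<^esub> z"
    if "x \<sqsubseteq>\<^bsub>L\<^esub> y" "y \<sqsubseteq>\<^bsub>L\<^esub> z" "x \<in> carrier L" "y \<in> carrier L" "z \<in> carrier L"
    for x y z
    using that by (intro prod_le_trans[of x y z]) simp_all
qed (simp_all add: prod_sub_eq)

lemma prod_meet_greatest:
  assumes a: "a \<in> S" and b: "b \<in> S"
  shows "greatest L (\<lambda>i\<in>{1..t}. a i \<sqinter>\<^bsub>Ls i\<^esub> b i) (Lower L {a, b})"
proof -
  let ?g = "\<lambda>i\<in>{1..t}. a i \<sqinter>\<^bsub>Ls i\<^esub> b i"
  have "?g \<in> S" using subdirect a b by (simp add: subdirect_product_def)
  moreover have "?g \<sqsubseteq>\<^bsub>L\<^esub> a \<and> ?g \<sqsubseteq>\<^bsub>L\<^esub> b"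
    unfolding prod_sub_le
  proof (intro conjI ballI)
    fix i assume i: "i \<in> {1..t}"
    interpret Li: lattice "Ls i" using i by (rule factor_lattice)
    show "?g i \<sqsubseteq>\<^bsub>Ls i\<^esub> a i" "?g i \<sqsubseteq>\<^bsub>Ls i\<^esub> b i"
      using a b i coord_in_carrier by (simp_all add: Li.meet_left Li.meet_right)
  qed
  ultimately have "?g \<in> Lower L {a, b}" by (auto simp: Lower_def)
  moreover have "z \<sqsubseteq>\<^bsub>L\<^esub> ?g" if "z \<in> Lower L {a, b}" for z
    unfolding prod_sub_le
  proof
    fix i assume i: "i \<in> {1..t}"
    interpret Li: lattice "Ls i" using i by (rule factor_lattice)
    have z: "z \<in> S" "z \<sqsubseteq>\<^bsub>L\<^esub> a" "z \<sqsubseteq>\<^bsub>L\<^esub> b"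
      using that a b by (auto simp: Lower_def)
    then have "z i \<sqsubseteq>\<^bsub>Ls i\<^esub> a i" "z i \<sqsubseteq>\<^bsub>Ls i\<^esub> b i"
      using i unfolding prod_sub_le by blast+
    then show "z i \<sqsubseteq>\<^bsub>Ls i\<^esub> ?g i"
      using a b z(1) i coord_in_carrier by (simp add: Li.meet_le)
  qed
  ultimately show ?thesis using Lower_closed[of L "{a, b}"] by (simp add: greatest_def)
qed

lemma prod_join_least:
  assumes a: "a \<in> S" and b: "b \<in> S"
  shows "least L (\<lambda>i\<in>{1..t}. a i \<squnion>\<^bsub>Ls i\<^esub> b i) (Upper L {a, b})"
proof -
  let ?s = "\<lambda>i\<in>{1..t}. a i \<squnion>\<^bsub>Ls i\<^esub> b i"
  have "?s \<in> S" using subdirect a b by (simp add: subdirect_product_def)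
  moreover have "a \<sqsubseteq>\<^bsub>L\<^esub> ?s \<and> b \<sqsubseteq>\<^bsub>L\<^esub> ?s"
    unfolding prod_sub_le
  proof (intro conjI ballI)
    fix i assume i: "i \<in> {1..t}"
    interpret Li: lattice "Ls i" using i by (rule factor_lattice)
    show "a i \<sqsubseteq>\<^bsub>Ls i\<^esub> ?s i" "b i \<sqsubseteq>\<^bsub>Ls i\<^esub> ?s i"
      using a b i coord_in_carrier by (simp_all add: Li.join_left Li.join_right)
  qed
  ultimately have "?s \<in> Upper L {a, b}" by (auto simp: Upper_def)
  moreover have "?s \<sqsubseteq>\<^bsub>L\<^esub> z" if "z \<in> Upper L {a, b}" for z
    unfolding prod_sub_le
  proof
    fix i assume i: "i \<in> {1..t}"
    interpret Li: lattice "Ls i" using i by (rule factor_lattice)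
    have z: "z \<in> S" "a \<sqsubseteq>\<^bsub>L\<^esub> z" "b \<sqsubseteq>\<^bsub>L\<^esub> z"
      using that a b by (auto simp: Upper_def)
    then have "a i \<sqsubseteq>\<^bsub>Ls i\<^esub> z i" "b i \<sqsubseteq>\<^bsub>Ls i\<^esub> z i"
      using i unfolding prod_sub_le by blast+
    then show "?s i \<sqsubseteq>\<^bsub>Ls i\<^esub> z i"
      using a b z(1) i coord_in_carrier by (simp add: Li.join_le)
  qed
  ultimately show ?thesis using Upper_closed[of L "{a, b}"] by (simp add: least_def)
qed

lemma prod_lattice: "lattice L"
proof -
  interpret partial_order L by (rule prod_partial_order)
  show ?thesis
    by unfold_locales (auto dest: prod_meet_greatest prod_join_least)
qed

lemma prod_meet_coord:
  assumes "a \<in> S" "b \<in> S" "i \<in> {1..t}"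
  shows "(a \<sqinter>\<^bsub>L\<^esub> b) i = a i \<sqinter>\<^bsub>Ls i\<^esub> b i"
proof -
  interpret partial_order L by (rule prod_partial_order)
  have "a \<sqinter>\<^bsub>L\<^esub> b = (\<lambda>i\<in>{1..t}. a i \<sqinter>\<^bsub>Ls i\<^esub> b i)"
    unfolding meet_def[of L] by (rule inf_eqI[OF prod_meet_greatest]) (use assms in auto)
  then show ?thesis using assms(3) by simp
qed

lemma prod_join_coord:
  assumes "a \<in> S" "b \<in> S" "i \<in> {1..t}"
  shows "(a \<squnion>\<^bsub>L\<^esub> b) i = a i \<squnion>\<^bsub>Ls i\<^esub> b i"
proof -
  interpret partial_order L by (rule prod_partial_order)
  have "a \<squnion>\<^bsub>L\<^esub> b = (\<lambda>i\<in>{1..t}. a i \<squnion>\<^bsub>Ls i\<^esub> b i)"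
    unfolding join_def[of L] by (rule sup_eqI[OF prod_join_least]) (use assms in auto)
  then show ?thesis using assms(3) by simp
qed

text \<open>S has a least element, and it projects onto the least element of every factor
  (the projections are surjective and monotone).\<close>
lemma prod_bottom_least: "least L (\<bottom>\<^bsub>L\<^esub>) S"
proof -
  interpret lattice L by (rule prod_lattice)
  have "S \<noteq> {}" using subdirect by (simp add: subdirect_product_def)
  then have "least L (\<Sqinter>\<^bsub>L\<^esub> S) S"
    using finite_lattice_has_least finite_S by simp
  then show ?thesis using bottom_eqI by simp
qed

lemma factor_bottom:
  assumes i: "i \<in> {1..t}"
  shows "\<bottom>\<^bsub>Ls i\<^esub> = (\<bottom>\<^bsub>L\<^esub>) i"
proof -
  interpret Li: partial_order "Ls i" using i by (rule factor_partial_order)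
  have onto: "(\<lambda>x. x i) ` S = carrier (Ls i)"
    using subdirect i by (simp add: subdirect_product_def)
  have "least (Ls i) ((\<bottom>\<^bsub>L\<^esub>) i) (carrier (Ls i))"
    unfolding least_def
  proof (intro conjI ballI subset_refl)
    show "(\<bottom>\<^bsub>L\<^esub>) i \<in> carrier (Ls i)"
      using prod_bottom_least i coord_in_carrier by (auto simp: least_def)
    fix c assume "c \<in> carrier (Ls i)"
    then obtain z where "z \<in> S" "c = z i" using onto by blast
    then show "(\<bottom>\<^bsub>L\<^esub>) i \<sqsubseteq>\<^bsub>Ls i\<^esub> c"
      using prod_bottom_least i unfolding least_def prod_sub_le by blast
  qed
  then show ?thesis by (rule Li.bottom_eqI)
qed

text \<open>If some lower cover k of a line top x agrees with x in coordinate i, then so does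
  the line base: every other lower cover w satisfies base = w \<sqinter> k, hence w i = base i
  (as w i \<sqsubseteq> x i = k i), and x is the join of two such covers.\<close>
lemma line_top_base_coord:
  assumes lt: "line_top L x" and i: "i \<in> {1..t}"
    and k: "k \<in> lower_covers L x" and k_i: "k i = x i"
  shows "line_base L x i = x i"
proof -
  interpret L: lattice L by (rule prod_lattice)
  interpret Li: lattice "Ls i" using i by (rule factor_lattice)
  let ?m = "line_base L x"
  have x_i: "x i \<in> carrier (Ls i)"
    using L.lower_coversD(2)[OF k] i coord_in_carrier by simp
  have other_i: "w i = ?m i" if w: "w \<in> lower_covers L x" "w \<noteq> k" for w
  proof -
    have w_i: "w i \<in> carrier (Ls i)" "w i \<sqsubseteq>\<^bsub>Ls i\<^esub> x i"
      using L.lower_coversD[OF w(1)] i coord_in_carrier unfolding prod_sub_le by auto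
    have "?m i = (w \<sqinter>\<^bsub>L\<^esub> k) i"
      using L.line_top_meet_join(1)[OF lt w(1) k w(2)] by simp
    also have "\<dots> = w i \<sqinter>\<^bsub>Ls i\<^esub> x i"
      using prod_meet_coord[OF _ _ i] L.lower_coversD[OF w(1)] L.lower_coversD[OF k] k_i
      by simp
    finally have "?m i = w i \<sqinter>\<^bsub>Ls i\<^esub> x i" .
    then show ?thesis using Li.le_iff_join[OF w_i(1) x_i] w_i(2) by simp
  qed
  obtain w1 where w1: "w1 \<in> lower_covers L x" "w1 \<noteq> k"
    using line_top_third_cover[OF lt] by blast
  obtain w2 where w2: "w2 \<in> lower_covers L x" "w2 \<noteq> k" "w2 \<noteq> w1"
    using line_top_third_cover[OF lt] by blast
  have m_i: "?m i \<in> carrier (Ls i)"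
    using L.line_baseD[OF lt w1(1)] i coord_in_carrier unfolding covered_by_def by simp
  have "x i = (w1 \<squnion>\<^bsub>L\<^esub> w2) i"
    using L.line_top_meet_join(2)[OF lt w1(1) w2(1) w2(3)[symmetric]] by simp
  also have "\<dots> = w1 i \<squnion>\<^bsub>Ls i\<^esub> w2 i"
    using prod_join_coord[OF _ _ i] L.lower_coversD(1)[OF w1(1)] L.lower_coversD(1)[OF w2(1)]
    by simp
  also have "\<dots> = ?m i \<squnion>\<^bsub>Ls i\<^esub> ?m i" using other_i[OF w1] other_i[OF w2(1,2)] by simp
  also have "\<dots> = ?m i"
    using Li.le_iff_meet[OF m_i m_i] Li.le_refl[OF m_i] by blast
  finally show ?thesis by simp
qed

text \<open>The heart of the scaffolding claim: if a line top x and its line base differ in the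
  coordinate i, then x is the least element of S whose i-th coordinate is x i.  Otherwise
  x \<sqinter> z < x for such a z, and a lower cover above x \<sqinter> z agrees with x in coordinate i.\<close>
lemma line_top_fibre_least:
  assumes x: "x \<in> S" and lt: "line_top L x" and i: "i \<in> {1..t}"
    and differ: "line_base L x i \<noteq> x i"
    and z: "z \<in> S" "z i = x i"
  shows "x \<sqsubseteq>\<^bsub>L\<^esub> z"
proof (rule ccontr)
  interpret L: lattice L by (rule prod_lattice)
  interpret Li: lattice "Ls i" using i by (rule factor_lattice)
  have x_i: "x i \<in> carrier (Ls i)" using x i by (rule coord_in_carrier)
  assume "\<not> x \<sqsubseteq>\<^bsub>L\<^esub> z"
  then have meet_below: "x \<sqinter>\<^bsub>L\<^esub> z \<sqsubset>\<^bsub>L\<^esub> x"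
    using x z L.meet_left[of x z] L.meet_right[of x z] by (auto simp: L.lless_eq)
  have fin: "finite (carrier L)" and xL: "x \<in> carrier L" and meet_in: "x \<sqinter>\<^bsub>L\<^esub> z \<in> carrier L"
    using finite_S x z L.meet_closed[of x z] by simp_all
  then obtain k where k: "k \<in> lower_covers L x" "x \<sqinter>\<^bsub>L\<^esub> z \<sqsubseteq>\<^bsub>L\<^esub> k"
    using L.lower_cover_above[OF fin xL meet_in meet_below] by blast
  have "k i = x i"
  proof (rule Li.le_antisym)
    have "(x \<sqinter>\<^bsub>L\<^esub> z) i = x i"
      using prod_meet_coord[OF x z(1) i] z(2) x_i Li.le_iff_join[OF x_i x_i] by simp
    then show "x i \<sqsubseteq>\<^bsub>Ls i\<^esub> k i" using k(2) i unfolding prod_sub_le by metis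
    show "k i \<sqsubseteq>\<^bsub>Ls i\<^esub> x i" using L.lower_coversD[OF k(1)] i unfolding prod_sub_le by blast
  qed (use L.lower_coversD[OF k(1)] i coord_in_carrier x_i in auto)
  then show False using line_top_base_coord[OF lt i k(1)] differ by simp
qed

text \<open>Second half of the theorem: a line top of S is the image \<open>\<sigma>\<^sub>i(x i)\<close> of its own
  coordinate, for any coordinate i in which it differs from its line base.\<close>
theorem line_top_in_scaffolding:
  assumes x: "x \<in> S" and lt: "line_top L x"
  shows "x \<in> scaffolding Ls t S"
proof -
  interpret L: lattice L by (rule prod_lattice)
  let ?m = "line_base L x"
  obtain w where w: "w \<in> lower_covers L x" using line_top_third_cover[OF lt] by blast
  have m: "?m \<in> S" "?m \<sqsubseteq>\<^bsub>L\<^esub> w"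
    using L.line_baseD[OF lt w] unfolding covered_by_def L.lless_eq by simp_all
  note w' = L.lower_coversD[OF w]
  have m_x: "?m \<sqsubseteq>\<^bsub>L\<^esub> x"
    using L.le_trans[OF m(2) w'(3)] m(1) w'(1,2) by simp
  have "?m \<noteq> x"
  proof
    assume "?m = x"
    then have "x \<sqsubseteq>\<^bsub>L\<^esub> w" using m(2) by simp
    then show False using L.le_antisym[of w x] w' by simp
  qed
  then obtain i where i: "i \<in> {1..t}" "?m i \<noteq> x i"
    using S_coord_ext[OF m(1) x] by blast
  interpret Li: partial_order "Ls i" using i(1) by (rule factor_partial_order)
  have sigma: "sigma Ls t S i (x i) = x"
    unfolding sigma_def
  proof (rule L.inf_eq_least_element)
    show "{z \<in> S. z i = x i} \<subseteq> carrier L" "x \<in> {z \<in> S. z i = x i}"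
      using x by auto
    show "\<forall>z\<in>{z \<in> S. z i = x i}. x \<sqsubseteq>\<^bsub>L\<^esub> z"
      using line_top_fibre_least[OF x lt i] by blast
  qed
  have "x i \<noteq> \<bottom>\<^bsub>Ls i\<^esub>"
  proof
    assume x_bot: "x i = \<bottom>\<^bsub>Ls i\<^esub>"
    have "(\<bottom>\<^bsub>L\<^esub>) i \<sqsubseteq>\<^bsub>Ls i\<^esub> ?m i"
      using prod_bottom_least m(1) i(1) unfolding least_def prod_sub_le by blast
    then have "x i \<sqsubseteq>\<^bsub>Ls i\<^esub> ?m i" using x_bot factor_bottom[OF i(1)] by simp
    moreover have "?m i \<sqsubseteq>\<^bsub>Ls i\<^esub> x i" using m_x i(1) unfolding prod_sub_le by blast
    ultimately have "?m i = x i"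
      using Li.le_antisym coord_in_carrier[OF m(1) i(1)] coord_in_carrier[OF x i(1)] by blast
    then show False using i(2) by contradiction
  qed
  then have "x i \<in> carrier (Ls i) - {\<bottom>\<^bsub>Ls i\<^esub>}"
    using coord_in_carrier[OF x i(1)] by blast
  then show ?thesis
    unfolding scaffolding_def using i(1) sigma[symmetric] by blast
qed

end

theorem mainTheorem4:
  fixes Ls :: "nat \<Rightarrow> 'a gorder" and t :: nat and S :: "(nat \<Rightarrow> 'a) set"
  assumes "subdirect_product Ls t S"
  shows "\<forall>x\<in>S. line_top (prod_sub Ls t S) x \<longrightarrow>
           sub_irreducible (prod_sub Ls t S) x \<and> x \<in> scaffolding Ls t S"
proof (intro ballI impI conjI)
  fix x assume x: "x \<in> S" and lt: "line_top (prod_sub Ls t S) x"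
  interpret lattice "prod_sub Ls t S" using assms by (rule prod_lattice)
  show "sub_irreducible (prod_sub Ls t S) x"
    by (rule line_top_sub_irreducible[OF _ lt]) (use prod_bottom_least[OF assms] in simp)
  show "x \<in> scaffolding Ls t S"
    using assms x lt by (rule line_top_in_scaffolding)
qed

end
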